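(* Let $n,d$ be positive integers, $\mathbf{c}\in\mathbb{Z}^n_{+}$, and $\mathbb{P}\subseteq[0,d]^n$ a bounded polyhedron with $\mathbb{P}\cap\mathbb{Z}^n\neq\emptyset$. Let $\mathbf{z}^\star=(z_0,\dots,z_n)$ be a lexicographically maximum element of $\{(\mathbf{c}^\top\mathbf{x},x_1,\dots,x_n):\mathbf{x}\in\mathbb{P}\}$ and let $\mathbf{x}^\star=(x_0,\dots,x_n)$ be a lexicographically maximum element of $\{(\mathbf{c}^\top\mathbf{x},x_1,\dots,x_n):\mathbf{x}\in\mathbb{P}\cap\mathbb{Z}^n\}$. Then $$\Big(d\sum_{i=1}^n\min(0,c_i),0,\dots,0\Big)\le_L \mathbf{x}^\star\le_L \alpha(\mathbf{z}^\star).$$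
   Context: Lexicographic order on $\mathbb{R}^{n+1}$: $\mathbf{x}<_L\mathbf{y}$ if there is $k\in\{0,\dots,n\}$ with $x_k<y_k$ and $x_i=y_i$ for all $i<k$; $\mathbf{x}\le_L\mathbf{y}$ means $\mathbf{x}<_L\mathbf{y}$ or $\mathbf{x}=\mathbf{y}$. A lexicographically maximum element of a set $T$ is some $\mathbf{t}\in T$ with $\mathbf{s}\le_L\mathbf{t}$ for all $\mathbf{s}\in T$. For $\mathbf{y}=(y_0,\dots,y_n)\in\mathbb{R}\times[0,d]^n$, define the integral vector $\alpha(\mathbf{y})$ by $\alpha(\mathbf{y})_i=\lfloor y_i\rfloor$ if $i\le k$ and $\alpha(\mathbf{y})_i=d$ if $i>k$, where $k=\min\{j\in\{0,\dots,n\}: y_j\notin\mathbb{Z}\}$; if $\mathbf{y}$ is integral, $\alpha(\mathbf{y})=\mathbf{y}$. *)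

theory Defs
  imports Complex_Main
begin

text \<open>Vectors of R^n are represented as functions nat => real with components at
  indices 1..n (all other components are 0). Vectors of R^(n+1) are functions
  nat => real whose relevant components are at indices 0..n.\<close>

definition Rn :: "nat \<Rightarrow> (nat \<Rightarrow> real) set" where
  "Rn n = {x. \<forall>i. (i = 0 \<or> n < i) \<longrightarrow> x i = 0}"

definition integral_vec :: "nat \<Rightarrow> (nat \<Rightarrow> real) \<Rightarrow> bool" where
  "integral_vec n x \<longleftrightarrow> (\<forall>i\<in>{1..n}. x i \<in> \<int>)"

definition polyhedron :: "nat \<Rightarrow> (nat \<Rightarrow> real) set \<Rightarrow> bool" where
  "polyhedron n P \<longleftrightarrow> (\<exists>m (A :: nat \<Rightarrow> nat \<Rightarrow> real) (b :: nat \<Rightarrow> real).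
      P = {x \<in> Rn n. \<forall>j<m. (\<Sum>i=1..n. A j i * x i) \<le> b j})"

definition lex_less :: "nat \<Rightarrow> (nat \<Rightarrow> real) \<Rightarrow> (nat \<Rightarrow> real) \<Rightarrow> bool" where
  "lex_less n x y \<longleftrightarrow> (\<exists>k\<le>n. x k < y k \<and> (\<forall>i<k. x i = y i))"

definition lex_le :: "nat \<Rightarrow> (nat \<Rightarrow> real) \<Rightarrow> (nat \<Rightarrow> real) \<Rightarrow> bool" where
  "lex_le n x y \<longleftrightarrow> lex_less n x y \<or> (\<forall>i\<le>n. x i = y i)"

definition lex_max :: "nat \<Rightarrow> (nat \<Rightarrow> real) set \<Rightarrow> (nat \<Rightarrow> real) \<Rightarrow> bool" where
  "lex_max n T t \<longleftrightarrow> t \<in> T \<and> (\<forall>s\<in>T. lex_le n s t)"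

definition lift :: "nat \<Rightarrow> (nat \<Rightarrow> int) \<Rightarrow> (nat \<Rightarrow> real) \<Rightarrow> (nat \<Rightarrow> real)" where
  "lift n c x = x(0 := (\<Sum>i=1..n. of_int (c i) * x i))"

definition alpha :: "nat \<Rightarrow> nat \<Rightarrow> (nat \<Rightarrow> real) \<Rightarrow> (nat \<Rightarrow> real)" where
  "alpha n d y = (if \<forall>j\<le>n. y j \<in> \<int> then y
     else (let k = (LEAST j. j \<le> n \<and> y j \<notin> \<int>) in
       (\<lambda>i. if i \<le> k then of_int \<lfloor>y i\<rfloor> else real d)))"

end

theory Submission
  imports Defs
begin

text \<open>Every vector of \<open>P \<inter> \<int>\<^sup>n\<close> lifts to an integral vector that is lexicographically below
  \<open>z\<^sup>\<star>\<close> and has its last \<open>n\<close> entries in \<open>[0,d]\<close>; among all such vectors \<open>\<alpha>(z\<^sup>\<star>)\<close> is the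
  lexicographically largest one: it agrees with \<open>z\<^sup>\<star>\<close> up to the first fractional entry,
  rounds that entry down, and fills the rest with the maximal value \<open>d\<close>.
  The lower bound holds because \<open>c\<^sub>i x\<^sub>i \<ge> d min(0,c\<^sub>i)\<close> for \<open>0 \<le> x\<^sub>i \<le> d\<close>.\<close>

lemma lex_le_if_eq_below_and_le:
  assumes "\<forall>i<m. x i = y i" and "\<forall>i. m \<le> i \<and> i \<le> n \<longrightarrow> x i \<le> y i"
  shows "lex_le n x y"
proof (cases "\<forall>i\<le>n. x i = y i")
  case True
  then show ?thesis by (simp add: lex_le_def)
next
  case False
  define k where "k = (LEAST i. i \<le> n \<and> x i \<noteq> y i)"
  have k: "k \<le> n" "x k \<noteq> y k"
    using LeastI_ex[of "\<lambda>i. i \<le> n \<and> x i \<noteq> y i"] False unfolding k_def by auto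
  have below_k: "\<forall>i<k. x i = y i"
    using not_less_Least k unfolding k_def by fastforce
  have "m \<le> k" using assms(1) k by (meson not_le)
  then have "x k < y k" using assms(2) k by (simp add: order_le_neq_trans)
  then show ?thesis using k below_k unfolding lex_le_def lex_less_def by blast
qed

lemma alpha_of_not_integral:
  assumes "\<not> (\<forall>j\<le>n. y j \<in> \<int>)"
  obtains k where "k \<le> n" "y k \<notin> \<int>" "\<forall>i<k. y i \<in> \<int>"
    and "alpha n d y = (\<lambda>i. if i \<le> k then of_int \<lfloor>y i\<rfloor> else real d)"
proof -
  define k where "k = (LEAST j. j \<le> n \<and> y j \<notin> \<int>)"
  have k: "k \<le> n" "y k \<notin> \<int>"
    using LeastI_ex[of "\<lambda>j. j \<le> n \<and> y j \<notin> \<int>"] assms unfolding k_def by auto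
  moreover have "\<forall>i<k. y i \<in> \<int>"
    using not_less_Least k unfolding k_def by fastforce
  moreover have "alpha n d y = (\<lambda>i. if i \<le> k then of_int \<lfloor>y i\<rfloor> else real d)"
    using assms unfolding alpha_def k_def[symmetric] Let_def by (rule if_not_P)
  ultimately show ?thesis using that by blast
qed

lemma lex_le_alpha_if_integral_lex_le:
  assumes integral: "\<forall>i\<le>n. x i \<in> \<int>" and bounded: "\<forall>i\<in>{1..n}. x i \<le> real d"
    and "lex_le n x y"
  shows "lex_le n x (alpha n d y)"
proof (cases "\<forall>j\<le>n. y j \<in> \<int>")
  case True
  then show ?thesis using assms(3) by (simp add: alpha_def)
next
  case False
  then obtain k where k: "k \<le> n" "y k \<notin> \<int>" and y_integral: "\<forall>i<k. y i \<in> \<int>"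
    and alpha_y: "alpha n d y = (\<lambda>i. if i \<le> k then of_int \<lfloor>y i\<rfloor> else real d)"
    by (rule alpha_of_not_integral)
  have floor_eq: "of_int \<lfloor>y i\<rfloor> = y i" if "y i \<in> \<int>" for i
    using that by (metis Ints_cases floor_of_int)
  have "lex_less n x y"
    using assms(3) k integral unfolding lex_le_def by auto
  then obtain j where j: "j \<le> n" "x j < y j" "\<forall>i<j. x i = y i"
    unfolding lex_less_def by auto
  have "\<not> k < j" using j(3) k integral by metis
  then consider "j < k" | "j = k" by linarith
  then show ?thesis
  proof cases
    case 1
    then have "x j < alpha n d y j" "\<forall>i<j. x i = alpha n d y i"
      using j y_integral floor_eq alpha_y by auto
    then show ?thesis using j(1) unfolding lex_le_def lex_less_def by blast
  next
    case 2
    obtain a where a: "x k = of_int a" using integral k by (metis Ints_cases)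
    then have "x k \<le> alpha n d y k"
      using j 2 alpha_y by (simp add: le_floor_iff)
    moreover have "\<forall>i<k. x i = alpha n d y i"
      using j 2 y_integral floor_eq alpha_y by auto
    moreover have "\<forall>i. k < i \<and> i \<le> n \<longrightarrow> x i \<le> alpha n d y i"
      using bounded alpha_y by auto
    ultimately show ?thesis
      by (intro lex_le_if_eq_below_and_le[where m = k]) (auto simp: order_le_less)
  qed
qed

lemma lift_integral:
  assumes "integral_vec n x"
  shows "\<forall>i\<le>n. lift n c x i \<in> \<int>"
  using assms unfolding integral_vec_def lift_def
  by (auto intro!: Ints_sum Ints_mult)

lemma lift_0_lower_bound:
  assumes "\<forall>i\<in>{1..n}. 0 \<le> x i \<and> x i \<le> real d"
  shows "real d * (\<Sum>i=1..n. real_of_int (min 0 (c i))) \<le> lift n c x 0"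
proof -
  have "real d * real_of_int (min 0 (c i)) \<le> of_int (c i) * x i" if "i \<in> {1..n}" for i
  proof (cases "c i \<ge> 0")
    case True
    then show ?thesis using assms that by simp
  next
    case False
    then show ?thesis using assms that by (simp add: mult_left_mono_neg)
  qed
  then show ?thesis
    unfolding lift_def sum_distrib_left by (auto intro!: sum_mono)
qed

theorem lemma1:
  fixes n d :: nat and c :: "nat \<Rightarrow> int" and P :: "(nat \<Rightarrow> real) set"
    and zs xs :: "nat \<Rightarrow> real"
  assumes "n > 0" and "d > 0"
    and "\<forall>i\<in>{1..n}. c i \<ge> 0"
    and "polyhedron n P"
    and "P \<subseteq> {x \<in> Rn n. \<forall>i\<in>{1..n}. 0 \<le> x i \<and> x i \<le> real d}"
    and "\<exists>x\<in>P. integral_vec n x"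
    and "lex_max n (lift n c ` P) zs"
    and "lex_max n (lift n c ` {x \<in> P. integral_vec n x}) xs"
  shows "lex_le n (\<lambda>i. if i = 0 then real d * (\<Sum>i=1..n. real_of_int (min 0 (c i))) else 0) xs
       \<and> lex_le n xs (alpha n d zs)"
proof -
  obtain x where x: "x \<in> P" "integral_vec n x" and xs: "xs = lift n c x"
    using assms(8) unfolding lex_max_def by auto
  have box: "\<forall>i\<in>{1..n}. 0 \<le> x i \<and> x i \<le> real d" using assms(5) x(1) by auto
  have "lex_le n xs zs" using assms(7) x xs unfolding lex_max_def by auto
  then have upper: "lex_le n xs (alpha n d zs)"
    using lex_le_alpha_if_integral_lex_le lift_integral[OF x(2)] box xs
    by (simp add: lift_def)
  have lower: "lex_le n (\<lambda>i. if i = 0 then real d * (\<Sum>i=1..n. real_of_int (min 0 (c i))) else 0) xs"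
    using lift_0_lower_bound[OF box, of c] box xs
    by (intro lex_le_if_eq_below_and_le[where m = 0]) (auto simp: lift_def)
  show ?thesis using lower upper by blast
qed

end
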